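(* Let $\mathfrak g$ be a Lie algebra over a field $\mathbb k$ and $(X,\Delta,q)$ its associated binary SD object. Define $\Psi^2$ on Lie $2$-cochains by $\Psi^2(\phi)((a,x)\otimes(b,y))=(0,\phi(x,y))$. Then $\Psi^2$ maps $Z^2_{\rm Lie}(\mathfrak g;\mathfrak g)$ into $Z^2_{\rm BSD}(X;X)$ and $B^2_{\rm Lie}(\mathfrak g;\mathfrak g)$ into $B^2_{\rm BSD}(X;X)$, hence induces a well-defined homomorphism $H^2_{\rm Lie}(\mathfrak g;\mathfrak g)\to H^2_{\rm BSD}(X;X)$.
   Context: Associated binary SD object: $X=\mathbb k\oplus\mathfrak g$ (elements $(a,x)$), $\Delta(a,x)=(a,x)\otimes(1,0)+(1,0)\otimes(0,x)$, $\varepsilon(a,x)=a$, $q((a,x)\otimes(b,y))=(ab,\,bx+[x,y])$. Sweedler notation $\Delta(w)=w^{(1)}\otimes w^{(2)}$; $\tau$ is the flip $u\otimes v\mapsto v\otimes u$. BSD cohomology: $C^1_{\rm BSD}(X;X)$ = linear $f\colon X\to X$ with $\Delta f=(f\otimes\mathbb 1+\mathbb 1\otimes f)\Delta$; $C^2_{\rm BSD}(X;X)$ = linear $\phi\colon X\otimes X\to X$ with $\Delta\phi=(\phi\otimes q+q\otimes\phi)(\mathbb 1\otimes\tau\otimes\mathbb 1)(\Delta\otimes\Delta)$; $\delta^1f(u\otimes v)=f(q(u\otimes v))-q(f(u)\otimes v)-q(u\otimes f(v))$; $\delta^2\phi(u\otimes v\otimes w)=q(\phi(u\otimes v)\otimes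 w)+\phi(q(u\otimes v)\otimes w)-\phi(q(u\otimes w^{(1)})\otimes q(v\otimes w^{(2)}))-q(\phi(u\otimes w^{(1)})\otimes q(v\otimes w^{(2)}))-q(q(u\otimes w^{(1)})\otimes\phi(v\otimes w^{(2)}))$; $Z^2_{\rm BSD}=C^2_{\rm BSD}\cap\ker\delta^2$, $B^2_{\rm BSD}=\delta^1(C^1_{\rm BSD})$, $H^2_{\rm BSD}=Z^2_{\rm BSD}/B^2_{\rm BSD}$. Lie cohomology: $2$-cochains are alternating bilinear $\phi\colon\mathfrak g\times\mathfrak g\to\mathfrak g$; $\delta^2\phi(x,y,z)=[\phi(x,y),z]+[\phi(y,z),x]+[\phi(z,x),y]+\phi([x,y],z)+\phi([y,z],x)+\phi([z,x],y)$; for linear $f\colon\mathfrak g\to\mathfrak g$, $\delta^1f(x,y)=f([x,y])-[f(x),y]-[x,f(y)]$; $Z^2_{\rm Lie}=\ker\delta^2$, $B^2_{\rm Lie}=\operatorname{im}\delta^1$, $H^2_{\rm Lie}=Z^2_{\rm Lie}/B^2_{\rm Lie}$. *)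

theory Defs
  imports Complex_Main "HOL-Library.Product_Plus"
begin

definition bilin ::
  "('k::field \<Rightarrow> 'a::ab_group_add \<Rightarrow> 'a) \<Rightarrow> ('k \<Rightarrow> 'b::ab_group_add \<Rightarrow> 'b) \<Rightarrow>
   ('k \<Rightarrow> 'c::ab_group_add \<Rightarrow> 'c) \<Rightarrow> ('a \<Rightarrow> 'b \<Rightarrow> 'c) \<Rightarrow> bool" where
  "bilin s1 s2 s3 f \<longleftrightarrow>
     (\<forall>x. Vector_Spaces.linear s2 s3 (f x)) \<and> (\<forall>y. Vector_Spaces.linear s1 s3 (\<lambda>x. f x y))"

definition lie_algebra :: "('k::field \<Rightarrow> 'g::ab_group_add \<Rightarrow> 'g) \<Rightarrow> ('g \<Rightarrow> 'g \<Rightarrow> 'g) \<Rightarrow> bool" where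
  "lie_algebra s br \<longleftrightarrow> vector_space s \<and> bilin s s s br \<and> (\<forall>x. br x x = 0) \<and>
     (\<forall>x y z. br x (br y z) + br y (br z x) + br z (br x y) = 0)"

definition C2_Lie :: "('k::field \<Rightarrow> 'g::ab_group_add \<Rightarrow> 'g) \<Rightarrow> ('g \<Rightarrow> 'g \<Rightarrow> 'g) set" where
  "C2_Lie s = {\<phi>. bilin s s s \<phi> \<and> (\<forall>x. \<phi> x x = 0)}"

definition delta2_Lie :: "('g::ab_group_add \<Rightarrow> 'g \<Rightarrow> 'g) \<Rightarrow> ('g \<Rightarrow> 'g \<Rightarrow> 'g) \<Rightarrow> 'g \<Rightarrow> 'g \<Rightarrow> 'g \<Rightarrow> 'g" where
  "delta2_Lie br \<phi> x y z =
     br (\<phi> x y) z + br (\<phi> y z) x + br (\<phi> z x) y + \<phi> (br x y) z + \<phi> (br y z) x + \<phi> (br z x) y"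

definition delta1_Lie :: "('g::ab_group_add \<Rightarrow> 'g \<Rightarrow> 'g) \<Rightarrow> ('g \<Rightarrow> 'g) \<Rightarrow> 'g \<Rightarrow> 'g \<Rightarrow> 'g" where
  "delta1_Lie br f x y = f (br x y) - br (f x) y - br x (f y)"

definition Z2_Lie :: "('k::field \<Rightarrow> 'g::ab_group_add \<Rightarrow> 'g) \<Rightarrow> ('g \<Rightarrow> 'g \<Rightarrow> 'g) \<Rightarrow> ('g \<Rightarrow> 'g \<Rightarrow> 'g) set" where
  "Z2_Lie s br = {\<phi> \<in> C2_Lie s. \<forall>x y z. delta2_Lie br \<phi> x y z = 0}"

definition B2_Lie :: "('k::field \<Rightarrow> 'g::ab_group_add \<Rightarrow> 'g) \<Rightarrow> ('g \<Rightarrow> 'g \<Rightarrow> 'g) \<Rightarrow> ('g \<Rightarrow> 'g \<Rightarrow> 'g) set" where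
  "B2_Lie s br = {delta1_Lie br f | f. Vector_Spaces.linear s s f}"

definition Xscale :: "('k::field \<Rightarrow> 'g::ab_group_add \<Rightarrow> 'g) \<Rightarrow> 'k \<Rightarrow> 'k \<times> 'g \<Rightarrow> 'k \<times> 'g" where
  "Xscale s c w = (c * fst w, s c (snd w))"

definition Xq :: "('k::field \<Rightarrow> 'g::ab_group_add \<Rightarrow> 'g) \<Rightarrow> ('g \<Rightarrow> 'g \<Rightarrow> 'g) \<Rightarrow>
    'k \<times> 'g \<Rightarrow> 'k \<times> 'g \<Rightarrow> 'k \<times> 'g" where
  "Xq s br u v = (fst u * fst v, s (fst v) (snd u) + br (snd u) (snd v))"

(* A tensor  sum_i x_i (x) y_i  in X (x) X is represented by the list of pairs [(x_i,y_i)].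
   Comultiplication: Delta(a,x) = (a,x) (x) (1,0) + (1,0) (x) (0,x). *)
definition Xcomult :: "'k::field \<times> 'g::ab_group_add \<Rightarrow> (('k \<times> 'g) \<times> ('k \<times> 'g)) list" where
  "Xcomult w = [(w, (1, 0)), ((1, 0), (0, snd w))]"

(* Equality of two such represented elements of X (x) X: they are equal in X (x) X iff
   every linear functional on X (x) X, i.e. every bilinear form X x X -> k, agrees on them. *)
definition tensor_eq :: "('k::field \<Rightarrow> 'g::ab_group_add \<Rightarrow> 'g) \<Rightarrow>
    (('k \<times> 'g) \<times> ('k \<times> 'g)) list \<Rightarrow> (('k \<times> 'g) \<times> ('k \<times> 'g)) list \<Rightarrow> bool" where
  "tensor_eq s L1 L2 \<longleftrightarrow>
     (\<forall>B :: 'k \<times> 'g \<Rightarrow> 'k \<times> 'g \<Rightarrow> 'k. bilin (Xscale s) (Xscale s) (*) B \<longrightarrow>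
        sum_list (map (\<lambda>(x, y). B x y) L1) = sum_list (map (\<lambda>(x, y). B x y) L2))"

(* C^1_BSD: linear f with  Delta f = (f (x) 1 + 1 (x) f) Delta *)
definition C1_BSD :: "('k::field \<Rightarrow> 'g::ab_group_add \<Rightarrow> 'g) \<Rightarrow> ('k \<times> 'g \<Rightarrow> 'k \<times> 'g) set" where
  "C1_BSD s = {f. Vector_Spaces.linear (Xscale s) (Xscale s) f \<and>
     (\<forall>w. tensor_eq s (Xcomult (f w))
            (concat (map (\<lambda>(w1, w2). [(f w1, w2), (w1, f w2)]) (Xcomult w))))}"

(* C^2_BSD: linear phi : X (x) X -> X (= bilinear X x X -> X) with
   Delta phi = (phi (x) q + q (x) phi)(1 (x) tau (x) 1)(Delta (x) Delta), checked on u (x) v *)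
definition C2_BSD :: "('k::field \<Rightarrow> 'g::ab_group_add \<Rightarrow> 'g) \<Rightarrow> ('g \<Rightarrow> 'g \<Rightarrow> 'g) \<Rightarrow>
    ('k \<times> 'g \<Rightarrow> 'k \<times> 'g \<Rightarrow> 'k \<times> 'g) set" where
  "C2_BSD s br = {\<phi>. bilin (Xscale s) (Xscale s) (Xscale s) \<phi> \<and>
     (\<forall>u v. tensor_eq s (Xcomult (\<phi> u v))
        (concat (map (\<lambda>((u1, u2), (v1, v2)).
             [(\<phi> u1 v1, Xq s br u2 v2), (Xq s br u1 v1, \<phi> u2 v2)])
           (List.product (Xcomult u) (Xcomult v)))))}"

definition delta1_BSD :: "('k::field \<Rightarrow> 'g::ab_group_add \<Rightarrow> 'g) \<Rightarrow> ('g \<Rightarrow> 'g \<Rightarrow> 'g) \<Rightarrow>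
    ('k \<times> 'g \<Rightarrow> 'k \<times> 'g) \<Rightarrow> 'k \<times> 'g \<Rightarrow> 'k \<times> 'g \<Rightarrow> 'k \<times> 'g" where
  "delta1_BSD s br f u v = f (Xq s br u v) - Xq s br (f u) v - Xq s br u (f v)"

definition delta2_BSD :: "('k::field \<Rightarrow> 'g::ab_group_add \<Rightarrow> 'g) \<Rightarrow> ('g \<Rightarrow> 'g \<Rightarrow> 'g) \<Rightarrow>
    ('k \<times> 'g \<Rightarrow> 'k \<times> 'g \<Rightarrow> 'k \<times> 'g) \<Rightarrow> 'k \<times> 'g \<Rightarrow> 'k \<times> 'g \<Rightarrow> 'k \<times> 'g \<Rightarrow> 'k \<times> 'g" where
  "delta2_BSD s br \<phi> u v w =
     Xq s br (\<phi> u v) w + \<phi> (Xq s br u v) w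
     - sum_list (map (\<lambda>(w1, w2).
          \<phi> (Xq s br u w1) (Xq s br v w2) + Xq s br (\<phi> u w1) (Xq s br v w2)
          + Xq s br (Xq s br u w1) (\<phi> v w2)) (Xcomult w))"

definition Z2_BSD :: "('k::field \<Rightarrow> 'g::ab_group_add \<Rightarrow> 'g) \<Rightarrow> ('g \<Rightarrow> 'g \<Rightarrow> 'g) \<Rightarrow>
    ('k \<times> 'g \<Rightarrow> 'k \<times> 'g \<Rightarrow> 'k \<times> 'g) set" where
  "Z2_BSD s br = {\<phi> \<in> C2_BSD s br. \<forall>u v w. delta2_BSD s br \<phi> u v w = 0}"

definition B2_BSD :: "('k::field \<Rightarrow> 'g::ab_group_add \<Rightarrow> 'g) \<Rightarrow> ('g \<Rightarrow> 'g \<Rightarrow> 'g) \<Rightarrow>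
    ('k \<times> 'g \<Rightarrow> 'k \<times> 'g \<Rightarrow> 'k \<times> 'g) set" where
  "B2_BSD s br = {delta1_BSD s br f | f. f \<in> C1_BSD s}"

definition Psi2 :: "('g \<Rightarrow> 'g \<Rightarrow> 'g) \<Rightarrow> 'k::field \<times> 'g \<Rightarrow> 'k \<times> 'g \<Rightarrow> 'k \<times> 'g" where
  "Psi2 \<phi> u v = (0, \<phi> (snd u) (snd v))"

end

theory Submission
  imports Defs
begin

text \<open>Writing \<open>\<Psi>\<^sup>1 f (a, x) = (0, f x)\<close>, the maps \<open>\<Psi>\<^sup>1, \<Psi>\<^sup>2\<close> commute with the coboundaries:
  \<open>\<delta>\<^sup>1\<^sub>B\<^sub>S\<^sub>D (\<Psi>\<^sup>1 f) = \<Psi>\<^sup>2 (\<delta>\<^sup>1\<^sub>L\<^sub>i\<^sub>e f)\<close> and \<open>\<delta>\<^sup>2\<^sub>B\<^sub>S\<^sub>D (\<Psi>\<^sup>2 \<phi>) = (0, \<delta>\<^sup>2\<^sub>L\<^sub>i\<^sub>e \<phi>)\<close>.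
  Expanding \<open>\<delta>\<^sup>2\<^sub>B\<^sub>S\<^sub>D\<close> with \<open>\<Delta>(c, z) = (c, z) \<otimes> (1, 0) + (1, 0) \<otimes> (0, z)\<close>, the terms scaled
  by the \<open>\<bbbk>\<close>-components cancel in pairs, and antisymmetry of \<open>\<phi>\<close> and of the bracket turns
  the remaining six terms into those of \<open>\<delta>\<^sup>2\<^sub>L\<^sub>i\<^sub>e \<phi>\<close>.
  The comultiplicativity conditions defining \<open>C\<^sup>1\<^sub>B\<^sub>S\<^sub>D\<close> and \<open>C\<^sup>2\<^sub>B\<^sub>S\<^sub>D\<close> hold because both
  sides of each reduce to the same expression under any bilinear form.\<close>

lemma linear_simps:
  assumes "Vector_Spaces.linear s1 s2 f"
  shows "f 0 = 0" "f (x + y) = f x + f y" "f (s1 c x) = s2 c (f x)" "f (- x) = - f x"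
proof -
  interpret module_hom s1 s2 f
    using assms by (simp add: linear_iff_module_hom)
  show "f 0 = 0" "f (x + y) = f x + f y" "f (s1 c x) = s2 c (f x)" "f (- x) = - f x"
    by (simp_all add: add scale neg)
qed

lemma vector_space_scale_simps:
  assumes "vector_space s"
  shows "s 0 x = 0" "s 1 x = x" "s c 0 = 0"
proof -
  interpret module s
    using assms by (simp add: module_iff_vector_space)
  show "s 0 x = 0" "s 1 x = x" "s c 0 = 0"
    by simp_all
qed

lemma vector_space_Xscale: "vector_space s \<Longrightarrow> vector_space (Xscale s)"
  unfolding vector_space_def Xscale_def by (auto simp: algebra_simps)

lemma bilin_simps:
  assumes "bilin s1 s2 s3 f"
  shows "f x 0 = 0" "f 0 y = 0"
    "f x (y + y') = f x y + f x y'" "f (x + x') y = f x y + f x' y"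
    "f x (s2 c y) = s3 c (f x y)" "f (s1 c x) y = s3 c (f x y)"
    "f (- x) y = - f x y" "f x (- y) = - f x y"
proof -
  have right: "Vector_Spaces.linear s2 s3 (f x)" for x
    using assms unfolding bilin_def by blast
  have left: "Vector_Spaces.linear s1 s3 (\<lambda>x. f x y)" for y
    using assms unfolding bilin_def by blast
  show "f x 0 = 0" "f x (y + y') = f x y + f x y'" "f x (s2 c y) = s3 c (f x y)"
    "f x (- y) = - f x y"
    using linear_simps[OF right] by simp_all
  show "f 0 y = 0" "f (x + x') y = f x y + f x' y" "f (s1 c x) y = s3 c (f x y)"
    "f (- x) y = - f x y"
    using linear_simps[OF left] by simp_all
qed

lemma bilin_alternating_antisym:
  assumes "bilin s1 s1 s3 f" and "\<forall>x. f x x = 0"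
  shows "f y x = - f x y"
proof -
  have "0 = f (x + y) (x + y)"
    using assms(2) by simp
  also have "\<dots> = f x x + f x y + (f y x + f y y)"
    using bilin_simps[OF assms(1)] by (simp add: add.assoc)
  also have "\<dots> = f x y + f y x"
    using assms(2) by simp
  finally show ?thesis
    by (simp add: eq_neg_iff_add_eq_0 add.commute)
qed

lemma tensor_eqI:
  assumes "\<And>B. bilin (Xscale s) (Xscale s) (*) B \<Longrightarrow>
     sum_list (map (\<lambda>(x, y). B x y) L1) = sum_list (map (\<lambda>(x, y). B x y) L2)"
  shows "tensor_eq s L1 L2"
  using assms unfolding tensor_eq_def by blast

lemma bilin_zero_Pair:
  assumes "bilin s1 s2 s3 B"
  shows "B (0, 0) y = 0" "B x (0, 0) = 0"
  using bilin_simps(1,2)[OF assms] by (simp_all add: zero_prod_def)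

lemma Psi2_in_C2_BSD:
  assumes vs: "vector_space s" and br: "bilin s s s br" and \<phi>: "bilin s s s \<phi>"
  shows "Psi2 \<phi> \<in> C2_BSD s br"
proof -
  have "bilin (Xscale s) (Xscale s) (Xscale s) (Psi2 \<phi>)"
    using vector_space_Xscale[OF vs]
    unfolding bilin_def Psi2_def
    by (auto simp: Vector_Spaces.linear_iff Xscale_def bilin_simps[OF \<phi>])
  moreover have "tensor_eq s (Xcomult (Psi2 \<phi> u v))
      (concat (map (\<lambda>((u1, u2), (v1, v2)).
           [(Psi2 \<phi> u1 v1, Xq s br u2 v2), (Xq s br u1 v1, Psi2 \<phi> u2 v2)])
         (List.product (Xcomult u) (Xcomult v))))" for u v
  proof (rule tensor_eqI)
    fix B :: "'a \<times> 'b \<Rightarrow> 'a \<times> 'b \<Rightarrow> 'a"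
    assume "bilin (Xscale s) (Xscale s) (*) B"
    then show "sum_list (map (\<lambda>(x, y). B x y) (Xcomult (Psi2 \<phi> u v))) =
      sum_list (map (\<lambda>(x, y). B x y) (concat (map (\<lambda>((u1, u2), (v1, v2)).
           [(Psi2 \<phi> u1 v1, Xq s br u2 v2), (Xq s br u1 v1, Psi2 \<phi> u2 v2)])
         (List.product (Xcomult u) (Xcomult v)))))"
      by (simp add: Xcomult_def Psi2_def Xq_def bilin_simps[OF \<phi>] bilin_simps[OF br]
          vector_space_scale_simps[OF vs] bilin_zero_Pair)
  qed
  ultimately show ?thesis
    unfolding C2_BSD_def by blast
qed

lemma delta2_BSD_Psi2:
  assumes vs: "vector_space s"
    and br: "bilin s s s br" "\<forall>x. br x x = 0"
    and \<phi>: "bilin s s s \<phi>" "\<forall>x. \<phi> x x = 0"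
  shows "delta2_BSD s br (Psi2 \<phi>) u v w = (0, delta2_Lie br \<phi> (snd u) (snd v) (snd w))"
proof -
  obtain a x b y c z where uvw: "u = (a, x)" "v = (b, y)" "w = (c, z)"
    by (cases u, cases v, cases w) simp
  have antisym:
    "\<phi> (br x z) y = - \<phi> (br z x) y" "\<phi> x (br y z) = - \<phi> (br y z) x"
    "br (\<phi> x z) y = - br (\<phi> z x) y" "br x (\<phi> y z) = - br (\<phi> y z) x"
    using bilin_alternating_antisym[OF br] bilin_alternating_antisym[OF \<phi>]
      bilin_simps(7)[OF \<phi>(1)] bilin_simps(7)[OF br(1)]
    by metis+
  show ?thesis
    unfolding delta2_BSD_def delta2_Lie_def uvw
    by (simp add: Xcomult_def Psi2_def Xq_def bilin_simps[OF \<phi>(1)] bilin_simps[OF br(1)]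
        vector_space_scale_simps[OF vs] antisym zero_prod_def algebra_simps)
qed

lemma Psi2_Z2:
  assumes vs: "vector_space s" and br: "bilin s s s br" "\<forall>x. br x x = 0"
    and "\<phi> \<in> Z2_Lie s br"
  shows "Psi2 \<phi> \<in> Z2_BSD s br"
proof -
  have \<phi>: "bilin s s s \<phi>" "\<forall>x. \<phi> x x = 0" and cocycle: "\<And>x y z. delta2_Lie br \<phi> x y z = 0"
    using assms(4) unfolding Z2_Lie_def C2_Lie_def by auto
  show ?thesis
    unfolding Z2_BSD_def
    using Psi2_in_C2_BSD[OF vs br(1) \<phi>(1)] delta2_BSD_Psi2[OF vs br \<phi>]
    by (simp add: cocycle zero_prod_def)
qed

definition Psi1 :: "('g \<Rightarrow> 'g) \<Rightarrow> 'k::field \<times> 'g \<Rightarrow> 'k \<times> 'g::ab_group_add" where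
  "Psi1 f w = (0, f (snd w))"

lemma Psi1_in_C1_BSD:
  assumes vs: "vector_space s" and f: "Vector_Spaces.linear s s f"
  shows "Psi1 f \<in> C1_BSD s"
proof -
  have "Vector_Spaces.linear (Xscale s) (Xscale s) (Psi1 f)"
    using vector_space_Xscale[OF vs]
    unfolding Vector_Spaces.linear_iff
    by (auto simp: Psi1_def Xscale_def linear_simps[OF f])
  moreover have "tensor_eq s (Xcomult (Psi1 f w))
      (concat (map (\<lambda>(w1, w2). [(Psi1 f w1, w2), (w1, Psi1 f w2)]) (Xcomult w)))" for w
  proof (rule tensor_eqI)
    fix B :: "'a \<times> 'b \<Rightarrow> 'a \<times> 'b \<Rightarrow> 'a"
    assume "bilin (Xscale s) (Xscale s) (*) B"
    then show "sum_list (map (\<lambda>(x, y). B x y) (Xcomult (Psi1 f w))) =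
      sum_list (map (\<lambda>(x, y). B x y)
        (concat (map (\<lambda>(w1, w2). [(Psi1 f w1, w2), (w1, Psi1 f w2)]) (Xcomult w))))"
      by (simp add: Xcomult_def Psi1_def linear_simps[OF f] bilin_zero_Pair)
  qed
  ultimately show ?thesis
    unfolding C1_BSD_def by blast
qed

lemma delta1_BSD_Psi1:
  assumes vs: "vector_space s" and br: "bilin s s s br" and f: "Vector_Spaces.linear s s f"
  shows "delta1_BSD s br (Psi1 f) = Psi2 (delta1_Lie br f)"
  by (simp add: fun_eq_iff delta1_BSD_def delta1_Lie_def Psi1_def Psi2_def Xq_def
      linear_simps[OF f] bilin_simps[OF br] vector_space_scale_simps[OF vs])

lemma Psi2_B2:
  assumes vs: "vector_space s" and br: "bilin s s s br" and "\<phi> \<in> B2_Lie s br"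
  shows "Psi2 \<phi> \<in> B2_BSD s br"
proof -
  obtain f where f: "Vector_Spaces.linear s s f" and \<phi>: "\<phi> = delta1_Lie br f"
    using assms(3) unfolding B2_Lie_def by auto
  show ?thesis
    unfolding B2_BSD_def \<phi>
    using Psi1_in_C1_BSD[OF vs f] delta1_BSD_Psi1[OF vs br f] by force
qed

theorem mainTheorem4:
  fixes s :: "'k::field \<Rightarrow> 'g::ab_group_add \<Rightarrow> 'g" and br :: "'g \<Rightarrow> 'g \<Rightarrow> 'g"
  assumes "lie_algebra s br"
  shows "(\<forall>\<phi> \<psi> c. Psi2 (\<lambda>x y. \<phi> x y + s c (\<psi> x y)) =
              (\<lambda>u v. (Psi2 \<phi> u v :: 'k \<times> 'g) + Xscale s c (Psi2 \<psi> u v)))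
       \<and> (\<forall>\<phi>. \<phi> \<in> Z2_Lie s br \<longrightarrow> Psi2 \<phi> \<in> Z2_BSD s br)
       \<and> (\<forall>\<phi>. \<phi> \<in> B2_Lie s br \<longrightarrow> Psi2 \<phi> \<in> B2_BSD s br)"
proof -
  have vs: "vector_space s" and br: "bilin s s s br" "\<forall>x. br x x = 0"
    using assms unfolding lie_algebra_def by auto
  have "Psi2 (\<lambda>x y. \<phi> x y + s c (\<psi> x y)) =
      (\<lambda>u v. (Psi2 \<phi> u v :: 'k \<times> 'g) + Xscale s c (Psi2 \<psi> u v))" for \<phi> \<psi> c
    by (simp add: Psi2_def Xscale_def fun_eq_iff)
  then show ?thesis
    using Psi2_Z2[OF vs br] Psi2_B2[OF vs br(1)] by blast
qed

end
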